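(* Let $k_0>0$ and let $w\in C^2(\mathbb{R})$ be real-valued with $\lim_{x\to\pm\infty}w(x)=\mp k_0$, such that $U(x)=-w(x)^2-iw'(x)+k_0^2$ satisfies $\int_{\mathbb{R}}(1+|x|)|U(x)|\,dx<\infty$ and $w(x)\to\mp k_0$ fast enough that $\lim_{x\to\pm\infty}(w(x)\pm k_0)=0$ uniformly governs the asymptotics below. For real $k\neq0$ let $\phi_{1,2}^{L,R}(x;k)$ be the Jost solutions of $-\psi''+U\psi=k^2\psi$, i.e. the solutions with $\phi_1^L\sim e^{ikx},\ \phi_2^L\sim e^{-ikx}$ as $x\to-\infty$ and $\phi_1^R\sim e^{ikx},\ \phi_2^R\sim e^{-ikx}$ as $x\to+\infty$ (with corresponding asymptotics of derivatives), and let the transfer matrix $M(k)=(M_{ij}(k))$ be defined by $\phi_1^L=M_{11}\phi_1^R+M_{21}\phi_2^R$, $\phi_2^L=M_{12}\phi_1^R+M_{22}\phi_2^R$. Then for every real $k\neq0$, $$(k+k_0)\,M_{22}(k)=(k-k_0)\,\overline{M_{11}(k)},$$ and for every real $k\notin\{0,\pm k_0\}$, $$M_{11}(k)=\overline{M_{22}(k)}\,\frac{k+k_0}{k-k_0},\qquad M_{12}(k)=-\overline{M_{21}(k)}.$$ In particular $M_{22}(k_0)=0$ (a spectral singularity at $k_0$), and if $k_\star\in\mathbb{R}\setminus\{0,\pm k_0\}$ satisfies $M_{22}(k_\star)=0$, then also $M_{11}(k_\star)=0$ (the spectral singularity at $k_\star$ is self-dual).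
   Context: A real $k$ with $M_{22}(k)=0$ is a spectral singularity; it is called self-dual if additionally $M_{11}(k)=0$. Overline denotes complex conjugation. *)

theory Defs
  imports "HOL-Analysis.Analysis"
begin

definition pot :: "(real \<Rightarrow> real) \<Rightarrow> (real \<Rightarrow> real) \<Rightarrow> real \<Rightarrow> real \<Rightarrow> complex" where
  "pot w wd k0 x = - (complex_of_real (w x))\<^sup>2 - \<i> * complex_of_real (wd x) + (complex_of_real k0)\<^sup>2"

definition schr_sol :: "(real \<Rightarrow> complex) \<Rightarrow> real \<Rightarrow> (real \<Rightarrow> complex) \<Rightarrow> (real \<Rightarrow> complex) \<Rightarrow> bool" where
  "schr_sol U k phi phid \<longleftrightarrow>
     (\<exists>phidd. \<forall>x. (phi has_vector_derivative phid x) (at x) \<and>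
                  (phid has_vector_derivative phidd x) (at x) \<and>
                  - phidd x + U x * phi x = (complex_of_real k)\<^sup>2 * phi x)"

text \<open>Jost solution: a solution with phi(x) ~ exp(c x), phi'(x) ~ c exp(c x) along the filter F
  (F = at_bot for x \<rightarrow> -\<infinity>, at_top for x \<rightarrow> +\<infinity>; c = i k or c = -i k).\<close>
definition jost :: "(real \<Rightarrow> complex) \<Rightarrow> real \<Rightarrow> complex \<Rightarrow> real filter \<Rightarrow> (real \<Rightarrow> complex) \<Rightarrow> bool" where
  "jost U k c F phi \<longleftrightarrow>
     (\<exists>phid. schr_sol U k phi phid \<and>
        ((\<lambda>x. phi x - exp (c * complex_of_real x)) \<longlongrightarrow> 0) F \<and>
        ((\<lambda>x. phid x - c * exp (c * complex_of_real x)) \<longlongrightarrow> 0) F)"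

end

theory Submission
  imports Defs
begin

text \<open>
  Since -d^2 + U = k0^2 - (d - i w)(d + i w) and its complex conjugate is
  k0^2 - (d + i w)(d - i w), the map psi \<mapsto> cnj (psi' + i w psi) sends solutions of
  -psi'' + U psi = k^2 psi (k real) to solutions. As w \<rightarrow> k0 at -\<infinity>, the image of
  phi1L has there, together with its derivative, the asymptotics of -i (k + k0) phi2L. The
  difference of these two solutions therefore has vanishing Wronskians with phi1L and phi2L,
  whose own Wronskian is -2 i k \<noteq> 0, so it is zero. Expanding both sides in the right Jost basis and comparing the
  coefficients of e^(ikx) and e^(-ikx) at +\<infinity>, where w \<rightarrow> -k0, gives
  (k + k0) M22 = (k - k0) cnj M11 and (k + k0) (M12 + cnj M21) = 0.
\<close>

definition plane_wave :: "real \<Rightarrow> real \<Rightarrow> complex" where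
  "plane_wave a x = exp (\<i> * complex_of_real (a * x))"

lemma norm_plane_wave [simp]: "norm (plane_wave a x) = 1"
  by (simp add: plane_wave_def)

lemma cnj_plane_wave [simp]: "cnj (plane_wave a x) = plane_wave (- a) x"
  by (simp add: plane_wave_def exp_cnj)

lemma plane_wave_add: "plane_wave a (x + y) = plane_wave a x * plane_wave a y"
  by (simp add: plane_wave_def distrib_left exp_add)

lemma plane_wave_quarter_period: "a \<noteq> 0 \<Longrightarrow> plane_wave a (pi / (2 * a)) = \<i>"
  by (simp add: plane_wave_def exp_eq_polar complex_eq_iff)

lemma tendsto_mult_unimodular_iff:
  fixes f e :: "'a \<Rightarrow> complex"
  assumes "\<And>x. norm (e x) = 1"
  shows "((\<lambda>x. f x * e x) \<longlongrightarrow> L) F \<longleftrightarrow> ((\<lambda>x. f x - L * cnj (e x)) \<longlongrightarrow> 0) F"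
proof -
  have "norm (f x * e x - L) = norm (f x - L * cnj (e x))" for x
  proof -
    have "f x * e x - L = (f x - L * cnj (e x)) * e x"
      using assms[of x] by (simp add: algebra_simps complex_norm_square[symmetric])
    then show ?thesis by (simp add: norm_mult assms)
  qed
  then have "((\<lambda>x. norm (f x * e x - L)) \<longlongrightarrow> 0) F \<longleftrightarrow>
      ((\<lambda>x. norm (f x - L * cnj (e x))) \<longlongrightarrow> 0) F"
    by (simp only:)
  then show ?thesis
    unfolding Lim_null[of "\<lambda>x. f x * e x"] tendsto_norm_zero_iff .
qed

lemma plane_wave_combination_tendsto_zero:
  assumes "a \<noteq> 0" and lim: "((\<lambda>x. b * plane_wave a x + c * plane_wave (- a) x) \<longlongrightarrow> 0) at_top"
  shows "b = 0 \<and> c = 0"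
proof -
  define g where "g x = b * plane_wave a x + c * plane_wave (- a) x" for x
  \<comment> \<open>a shift by a quarter period multiplies the two waves by i and -i\<close>
  define h where "h = pi / (2 * a)"
  have wave_h: "plane_wave a h = \<i>" and wave_minus_h: "plane_wave (- a) h = - \<i>"
    using plane_wave_quarter_period[OF \<open>a \<noteq> 0\<close>] cnj_plane_wave[of a h] by (simp_all add: h_def)
  have g_lim: "(g \<longlongrightarrow> 0) at_top"
    using lim unfolding g_def .
  have "filterlim (\<lambda>x. x + h) at_top at_top"
    using filterlim_tendsto_add_at_top[OF tendsto_const filterlim_ident, of h] by (simp add: add.commute)
  with g_lim have "((\<lambda>x. g (x + h)) \<longlongrightarrow> 0) at_top"
    by (rule filterlim_compose)
  from tendsto_diff[OF g_lim tendsto_mult_right_zero[OF this, of \<i>]]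
  have "((\<lambda>x. g x - \<i> * g (x + h)) \<longlongrightarrow> 0) at_top"
    by (simp only: diff_zero)
  moreover have "g x - \<i> * g (x + h) = 2 * b * plane_wave a x" for x
    by (simp add: g_def plane_wave_add wave_h wave_minus_h algebra_simps)
  ultimately have "((\<lambda>x. norm (2 * b * plane_wave a x)) \<longlongrightarrow> 0) at_top"
    by (simp add: tendsto_norm_zero_iff)
  then have b: "b = 0"
    by (simp add: norm_mult tendsto_const_iff)
  with lim have "((\<lambda>x. c * plane_wave (- a) x) \<longlongrightarrow> 0) at_top"
    by simp
  then have "((\<lambda>x. norm (c * plane_wave (- a) x)) \<longlongrightarrow> 0) at_top"
    by (rule tendsto_norm_zero)
  with b show ?thesis
    by (simp add: norm_mult tendsto_const_iff)
qed

definition jost_asymptotics :: "real filter \<Rightarrow> real \<Rightarrow> (real \<Rightarrow> complex) \<Rightarrow> (real \<Rightarrow> complex) \<Rightarrow> bool" where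
  "jost_asymptotics F a phi phi' \<longleftrightarrow>
     ((\<lambda>x. phi x * plane_wave (- a) x) \<longlongrightarrow> 1) F \<and>
     ((\<lambda>x. phi' x * plane_wave (- a) x) \<longlongrightarrow> \<i> * complex_of_real a) F"

lemma jost_imp_asymptotics:
  assumes "jost U k (\<i> * complex_of_real a) F phi"
  obtains phi' where "schr_sol U k phi phi'" and "jost_asymptotics F a phi phi'"
proof -
  have wave: "exp (\<i> * complex_of_real a * complex_of_real x) = plane_wave a x" for x
    by (simp add: plane_wave_def mult.assoc)
  obtain phi' where "schr_sol U k phi phi'"
    and "((\<lambda>x. phi x - 1 * cnj (plane_wave (- a) x)) \<longlongrightarrow> 0) F"
    and "((\<lambda>x. phi' x - \<i> * complex_of_real a * cnj (plane_wave (- a) x)) \<longlongrightarrow> 0) F"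
    using assms by (auto simp: jost_def wave)
  then show ?thesis
    using that by (simp add: jost_asymptotics_def tendsto_mult_unimodular_iff)
qed

definition wronskian :: "(real \<Rightarrow> complex) \<Rightarrow> (real \<Rightarrow> complex) \<Rightarrow> (real \<Rightarrow> complex) \<Rightarrow> (real \<Rightarrow> complex) \<Rightarrow> real \<Rightarrow> complex" where
  "wronskian f f' g g' x = f x * g' x - f' x * g x"

lemma schr_solE:
  assumes "schr_sol U k f f'"
  obtains f'' where "\<And>x. (f has_vector_derivative f' x) (at x)"
    and "\<And>x. (f' has_vector_derivative f'' x) (at x)"
    and "\<And>x. f'' x = (U x - (complex_of_real k)\<^sup>2) * f x"
proof -
  obtain f'' where f'': "\<forall>x. (f has_vector_derivative f' x) (at x) \<and> (f' has_vector_derivative f'' x) (at x) \<and>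
      - f'' x + U x * f x = (complex_of_real k)\<^sup>2 * f x"
    using assms unfolding schr_sol_def by blast
  have "f'' x = (U x - (complex_of_real k)\<^sup>2) * f x" for x
  proof -
    have "- f'' x + U x * f x = (complex_of_real k)\<^sup>2 * f x"
      using f'' by blast
    then show ?thesis
      by algebra
  qed
  with f'' that show ?thesis
    by blast
qed

lemma schr_sol_wronskian_const:
  assumes "schr_sol U k f f'" and "schr_sol U k g g'"
  shows "wronskian f f' g g' x = wronskian f f' g g' y"
proof -
  obtain f'' where f: "\<And>x. (f has_vector_derivative f' x) (at x)" "\<And>x. (f' has_vector_derivative f'' x) (at x)"
    and f'': "\<And>x. f'' x = (U x - (complex_of_real k)\<^sup>2) * f x"
    using schr_solE[OF assms(1)] by blast
  obtain g'' where g: "\<And>x. (g has_vector_derivative g' x) (at x)" "\<And>x. (g' has_vector_derivative g'' x) (at x)"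
    and g'': "\<And>x. g'' x = (U x - (complex_of_real k)\<^sup>2) * g x"
    using schr_solE[OF assms(2)] by blast
  have deriv: "(wronskian f f' g g' has_vector_derivative 0) (at x within UNIV)" if "x \<in> UNIV" for x
  proof -
    have "(wronskian f f' g g' has_vector_derivative f x * g'' x - f'' x * g x) (at x)"
      unfolding wronskian_def using f g by (auto intro!: derivative_eq_intros simp: algebra_simps)
    then show ?thesis
      by (simp add: f'' g'')
  qed
  obtain c where "\<And>x. x \<in> UNIV \<Longrightarrow> wronskian f f' g g' x = c"
    using has_vector_derivative_zero_constant[OF convex_UNIV deriv] by blast
  then show ?thesis
    by simp
qed

lemma wronskian_expansion:
  "f x * wronskian g g' h h' x = g x * wronskian f f' h h' x - h x * wronskian f f' g g' x"
  by (simp add: wronskian_def algebra_simps)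

lemma norm_wronskian_eq_limit:
  assumes "F \<noteq> bot" and const: "\<And>x y. wronskian f f' g g' x = wronskian f f' g g' y"
    and "((\<lambda>x. f x * p x) \<longlongrightarrow> a) F" "((\<lambda>x. f' x * p x) \<longlongrightarrow> a') F"
    and "((\<lambda>x. g x * q x) \<longlongrightarrow> b) F" "((\<lambda>x. g' x * q x) \<longlongrightarrow> b') F"
    and unimodular: "\<And>x. norm (p x * q x) = 1"
  shows "norm (wronskian f f' g g' y) = norm (a * b' - a' * b)"
proof -
  have "((\<lambda>x. (f x * p x) * (g' x * q x) - (f' x * p x) * (g x * q x)) \<longlongrightarrow> a * b' - a' * b) F"
    using assms by (intro tendsto_intros)
  from tendsto_norm[OF this]
  have "((\<lambda>x. norm ((f x * p x) * (g' x * q x) - (f' x * p x) * (g x * q x))) \<longlongrightarrow> norm (a * b' - a' * b)) F" .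
  moreover have "norm ((f x * p x) * (g' x * q x) - (f' x * p x) * (g x * q x)) = norm (wronskian f f' g g' y)" for x
  proof -
    have "(f x * p x) * (g' x * q x) - (f' x * p x) * (g x * q x) = wronskian f f' g g' x * (p x * q x)"
      by (simp add: wronskian_def algebra_simps)
    then show ?thesis
      by (metis const norm_mult unimodular mult.right_neutral)
  qed
  ultimately have "((\<lambda>x. norm (wronskian f f' g g' y)) \<longlongrightarrow> norm (a * b' - a' * b)) F"
    by (simp only:)
  with \<open>F \<noteq> bot\<close> show ?thesis
    by (simp add: tendsto_const_iff)
qed

definition dual_sol :: "(real \<Rightarrow> real) \<Rightarrow> (real \<Rightarrow> complex) \<Rightarrow> (real \<Rightarrow> complex) \<Rightarrow> real \<Rightarrow> complex" where
  "dual_sol w phi phi' x = cnj (phi' x + \<i> * complex_of_real (w x) * phi x)"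

definition dual_sol_deriv ::
    "real \<Rightarrow> real \<Rightarrow> (real \<Rightarrow> real) \<Rightarrow> (real \<Rightarrow> complex) \<Rightarrow> (real \<Rightarrow> complex) \<Rightarrow> real \<Rightarrow> complex" where
  "dual_sol_deriv k0 k w phi phi' x =
     cnj (complex_of_real (k0\<^sup>2 - k\<^sup>2 - (w x)\<^sup>2) * phi x + \<i> * complex_of_real (w x) * phi' x)"

lemma schr_sol_dual:
  assumes sol: "schr_sol (pot w wd k0) k phi phi'"
    and w': "\<And>x. (w has_real_derivative wd x) (at x)"
  shows "schr_sol (pot w wd k0) k (dual_sol w phi phi') (dual_sol_deriv k0 k w phi phi')"
proof -
  obtain phi'' where d: "\<And>x. (phi has_vector_derivative phi' x) (at x)"
      "\<And>x. (phi' has_vector_derivative phi'' x) (at x)"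
    and phi'': "\<And>x. phi'' x = (pot w wd k0 x - (complex_of_real k)\<^sup>2) * phi x"
    using schr_solE[OF sol] by blast
  define V where "V x = complex_of_real (k0\<^sup>2 - k\<^sup>2 - (w x)\<^sup>2)" for x
  have V': "(V has_vector_derivative complex_of_real (- 2 * w x * wd x)) (at x)" for x
    unfolding V_def using w'[of x]
    by (auto intro!: has_vector_derivative_of_real derivative_eq_intros simp: power2_eq_square)
  define chi' where "chi' x = complex_of_real (- 2 * w x * wd x) * phi x + V x * phi' x
      + \<i> * complex_of_real (wd x) * phi' x + \<i> * complex_of_real (w x) * phi'' x" for x
  have chi': "chi' x = (cnj (pot w wd k0 x) - (complex_of_real k)\<^sup>2) *
      (phi' x + \<i> * complex_of_real (w x) * phi x)" for x
    by (simp add: chi'_def V_def phi'' pot_def power2_eq_square algebra_simps)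
  have dual_sol_deriv: "dual_sol_deriv k0 k w phi phi' x = cnj (V x * phi x + \<i> * complex_of_real (w x) * phi' x)" for x
    by (simp add: dual_sol_deriv_def V_def)
  show ?thesis
    unfolding schr_sol_def
  proof (intro exI[of _ "\<lambda>x. cnj (chi' x)"] allI conjI)
    fix x
    have "(dual_sol w phi phi' has_vector_derivative
        cnj (phi'' x + (\<i> * complex_of_real (wd x) * phi x + \<i> * complex_of_real (w x) * phi' x))) (at x)"
      unfolding dual_sol_def using d w'[of x] by (auto intro!: derivative_eq_intros)
    then show "(dual_sol w phi phi' has_vector_derivative dual_sol_deriv k0 k w phi phi' x) (at x)"
      by (simp add: dual_sol_deriv V_def phi'' pot_def algebra_simps)
    show "(dual_sol_deriv k0 k w phi phi' has_vector_derivative cnj (chi' x)) (at x)"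
      unfolding dual_sol_deriv[abs_def] chi'_def using d V' w'[of x]
      by (auto intro!: derivative_eq_intros simp: algebra_simps)
    show "- cnj (chi' x) + pot w wd k0 x * dual_sol w phi phi' x =
        (complex_of_real k)\<^sup>2 * dual_sol w phi phi' x"
      by (simp add: chi' dual_sol_def algebra_simps)
  qed
qed

lemma schr_sol_lincomb:
  assumes "schr_sol U k f f'" and "schr_sol U k g g'"
  shows "schr_sol U k (\<lambda>x. a * f x + b * g x) (\<lambda>x. a * f' x + b * g' x)"
proof -
  obtain f'' where f: "\<And>x. (f has_vector_derivative f' x) (at x)" "\<And>x. (f' has_vector_derivative f'' x) (at x)"
    and f'': "\<And>x. f'' x = (U x - (complex_of_real k)\<^sup>2) * f x"
    using schr_solE[OF assms(1)] by blast
  obtain g'' where g: "\<And>x. (g has_vector_derivative g' x) (at x)" "\<And>x. (g' has_vector_derivative g'' x) (at x)"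
    and g'': "\<And>x. g'' x = (U x - (complex_of_real k)\<^sup>2) * g x"
    using schr_solE[OF assms(2)] by blast
  show ?thesis
    unfolding schr_sol_def
    by (rule exI[of _ "\<lambda>x. a * f'' x + b * g'' x"])
      (use f g in \<open>auto intro!: derivative_eq_intros simp: f'' g'' algebra_simps\<close>)
qed

lemma schr_sol_deriv_unique:
  assumes "schr_sol U k f f'" and "schr_sol V l f g'"
  shows "f' = g'"
proof
  fix x
  show "f' x = g' x"
    using schr_solE[OF assms(1)] schr_solE[OF assms(2)] vector_derivative_unique_at by metis
qed

lemma dual_sol_asymptotics:
  assumes w: "(w \<longlongrightarrow> c) F" and jost: "jost_asymptotics F a phi phi'"
  shows "((\<lambda>x. dual_sol w phi phi' x * plane_wave a x) \<longlongrightarrow> - \<i> * complex_of_real (a + c)) F"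
    and "((\<lambda>x. dual_sol_deriv k0 k w phi phi' x * plane_wave a x)
      \<longlongrightarrow> complex_of_real (k0\<^sup>2 - k\<^sup>2 - c\<^sup>2 - a * c)) F"
proof -
  have phi: "((\<lambda>x. phi x * plane_wave (- a) x) \<longlongrightarrow> 1) F"
    and phi': "((\<lambda>x. phi' x * plane_wave (- a) x) \<longlongrightarrow> \<i> * complex_of_real a) F"
    using jost unfolding jost_asymptotics_def by blast+
  have w: "((\<lambda>x. complex_of_real (w x)) \<longlongrightarrow> complex_of_real c) F"
    using w by (rule tendsto_of_real)
  have "((\<lambda>x. cnj (phi' x * plane_wave (- a) x + \<i> * complex_of_real (w x) * (phi x * plane_wave (- a) x)))
      \<longlongrightarrow> cnj (\<i> * complex_of_real a + \<i> * complex_of_real c * 1)) F"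
    by (intro tendsto_intros phi phi' w)
  then show "((\<lambda>x. dual_sol w phi phi' x * plane_wave a x) \<longlongrightarrow> - \<i> * complex_of_real (a + c)) F"
    by (simp add: dual_sol_def algebra_simps)
  have "((\<lambda>x. cnj (complex_of_real (k0\<^sup>2 - k\<^sup>2 - (w x)\<^sup>2) * (phi x * plane_wave (- a) x)
        + \<i> * complex_of_real (w x) * (phi' x * plane_wave (- a) x)))
      \<longlongrightarrow> cnj (complex_of_real (k0\<^sup>2 - k\<^sup>2 - c\<^sup>2) * 1 + \<i> * complex_of_real c * (\<i> * complex_of_real a))) F"
    by (intro tendsto_intros phi phi' w assms(1))
  then show "((\<lambda>x. dual_sol_deriv k0 k w phi phi' x * plane_wave a x)
      \<longlongrightarrow> complex_of_real (k0\<^sup>2 - k\<^sup>2 - c\<^sup>2 - a * c)) F"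
    by (simp add: dual_sol_deriv_def algebra_simps)
qed

lemma dual_sol_left_jost:
  assumes w': "\<And>x. (w has_real_derivative wd x) (at x)" and w: "(w \<longlongrightarrow> k0) at_bot" and "k \<noteq> 0"
    and sol1: "schr_sol (pot w wd k0) k phi1 phi1'" and jost1: "jost_asymptotics at_bot k phi1 phi1'"
    and sol2: "schr_sol (pot w wd k0) k phi2 phi2'" and jost2: "jost_asymptotics at_bot (- k) phi2 phi2'"
  shows "dual_sol w phi1 phi1' x = - \<i> * complex_of_real (k + k0) * phi2 x"
proof -
  define D where "D x = dual_sol w phi1 phi1' x + \<i> * complex_of_real (k + k0) * phi2 x" for x
  define D' where "D' x = dual_sol_deriv k0 k w phi1 phi1' x + \<i> * complex_of_real (k + k0) * phi2' x" for x
  have sol_D: "schr_sol (pot w wd k0) k D D'"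
    using schr_sol_lincomb[OF schr_sol_dual[OF sol1 w'] sol2, of 1] by (simp add: D_def[abs_def] D'_def[abs_def])
  have phi1: "((\<lambda>x. phi1 x * plane_wave (- k) x) \<longlongrightarrow> 1) at_bot"
    and phi1': "((\<lambda>x. phi1' x * plane_wave (- k) x) \<longlongrightarrow> \<i> * complex_of_real k) at_bot"
    using jost1 unfolding jost_asymptotics_def by blast+
  have phi2: "((\<lambda>x. phi2 x * plane_wave k x) \<longlongrightarrow> 1) at_bot"
    and phi2': "((\<lambda>x. phi2' x * plane_wave k x) \<longlongrightarrow> - \<i> * complex_of_real k) at_bot"
    using jost2 unfolding jost_asymptotics_def by simp_all
  have "((\<lambda>x. D x * plane_wave k x) \<longlongrightarrow> - \<i> * complex_of_real (k + k0) + \<i> * complex_of_real (k + k0) * 1) at_bot"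
    unfolding D_def distrib_right mult.assoc
    by (intro tendsto_intros dual_sol_asymptotics(1)[OF w jost1] phi2)
  then have D: "((\<lambda>x. D x * plane_wave k x) \<longlongrightarrow> 0) at_bot"
    by simp
  have "((\<lambda>x. D' x * plane_wave k x) \<longlongrightarrow>
      complex_of_real (k0\<^sup>2 - k\<^sup>2 - k0\<^sup>2 - k * k0) + \<i> * complex_of_real (k + k0) * (- \<i> * complex_of_real k)) at_bot"
    unfolding D'_def distrib_right mult.assoc
    by (intro tendsto_intros dual_sol_asymptotics(2)[OF w jost1] phi2')
  then have D': "((\<lambda>x. D' x * plane_wave k x) \<longlongrightarrow> 0) at_bot"
    by (simp add: algebra_simps power2_eq_square)
  have "norm (wronskian phi1 phi1' phi2 phi2' x) = norm (1 * (- \<i> * complex_of_real k) - \<i> * complex_of_real k * 1)"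
    by (rule norm_wronskian_eq_limit[OF _ schr_sol_wronskian_const[OF sol1 sol2] phi1 phi1' phi2 phi2']) (simp_all add: norm_mult)
  with \<open>k \<noteq> 0\<close> have "wronskian phi1 phi1' phi2 phi2' x \<noteq> 0"
    by (auto simp: norm_mult)
  moreover have "norm (wronskian D D' phi2 phi2' x) = norm (0 * (- \<i> * complex_of_real k) - 0 * 1)"
    by (rule norm_wronskian_eq_limit[OF _ schr_sol_wronskian_const[OF sol_D sol2] D D' phi2 phi2']) (simp_all add: norm_mult)
  moreover have "norm (wronskian D D' phi1 phi1' x) = norm (0 * (\<i> * complex_of_real k) - 0 * 1)"
    by (rule norm_wronskian_eq_limit[OF _ schr_sol_wronskian_const[OF sol_D sol1] D D' phi1 phi1']) (simp_all add: norm_mult)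
  ultimately have "D x = 0"
    using wronskian_expansion[of D x phi1 phi1' phi2 phi2' D' ] by simp
  then show ?thesis
    unfolding D_def by (simp add: add_eq_0_iff2)
qed

lemma dual_jost_combination_coefficients:
  assumes w: "(w \<longlongrightarrow> - k0) at_top" and "k \<noteq> 0"
    and jost1: "jost_asymptotics at_top k phi1 phi1'" and jost2: "jost_asymptotics at_top (- k) phi2 phi2'"
    and comb: "\<And>x. a * dual_sol w phi1 phi1' x + b * dual_sol w phi2 phi2' x + c * phi1 x + d * phi2 x = 0"
  shows "c = - \<i> * complex_of_real (k + k0) * b \<and> d = \<i> * complex_of_real (k - k0) * a"
proof -
  define A where "A = - \<i> * complex_of_real (k - k0)"
  define B where "B = \<i> * complex_of_real (k + k0)"
  have "- \<i> * complex_of_real (k + - k0) = A" "- \<i> * complex_of_real (- k + - k0) = B"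
    by (simp_all add: A_def B_def algebra_simps)
  note asymp = dual_sol_asymptotics(1)[OF w jost1, unfolded this(1)]
    dual_sol_asymptotics(1)[OF w jost2, unfolded this(2)]
  note unimodular = tendsto_mult_unimodular_iff[OF norm_plane_wave]
  have e1: "((\<lambda>x. dual_sol w phi1 phi1' x - A * plane_wave (- k) x) \<longlongrightarrow> 0) at_top"
    using asymp(1) unfolding unimodular cnj_plane_wave .
  have e2: "((\<lambda>x. dual_sol w phi2 phi2' x - B * plane_wave k x) \<longlongrightarrow> 0) at_top"
    using asymp(2) unfolding unimodular cnj_plane_wave minus_minus .
  have e3: "((\<lambda>x. phi1 x - 1 * plane_wave k x) \<longlongrightarrow> 0) at_top"
    using jost1 unfolding jost_asymptotics_def unimodular cnj_plane_wave minus_minus by blast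
  have e4: "((\<lambda>x. phi2 x - 1 * plane_wave (- k) x) \<longlongrightarrow> 0) at_top"
    using jost2 unfolding jost_asymptotics_def unimodular cnj_plane_wave minus_minus by blast
  have "((\<lambda>x. a * (dual_sol w phi1 phi1' x - A * plane_wave (- k) x)
      + b * (dual_sol w phi2 phi2' x - B * plane_wave k x)
      + c * (phi1 x - 1 * plane_wave k x) + d * (phi2 x - 1 * plane_wave (- k) x)) \<longlongrightarrow> 0) at_top"
    by (intro tendsto_add_zero tendsto_mult_right_zero e1 e2 e3 e4)
  moreover have "a * (dual_sol w phi1 phi1' x - A * plane_wave (- k) x)
      + b * (dual_sol w phi2 phi2' x - B * plane_wave k x)
      + c * (phi1 x - 1 * plane_wave k x) + d * (phi2 x - 1 * plane_wave (- k) x)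
      = - ((b * B + c) * plane_wave k x + (a * A + d) * plane_wave (- k) x)" for x
    using comb[of x] by (simp add: algebra_simps)
  ultimately have "((\<lambda>x. - ((b * B + c) * plane_wave k x + (a * A + d) * plane_wave (- k) x)) \<longlongrightarrow> 0) at_top"
    by simp
  from tendsto_minus[OF this]
  have "((\<lambda>x. (b * B + c) * plane_wave k x + (a * A + d) * plane_wave (- k) x) \<longlongrightarrow> 0) at_top"
    by (simp only: minus_minus minus_zero)
  then have "b * B + c = 0 \<and> a * A + d = 0"
    by (rule plane_wave_combination_tendsto_zero[OF \<open>k \<noteq> 0\<close>])
  then have "c = - (b * B)" and "d = - (a * A)"
    by (simp_all add: add_eq_0_iff)
  then show ?thesis
    by (simp add: A_def B_def)
qed

theorem mainTheorem5:
  fixes k0 k :: real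
    and w wd wdd :: "real \<Rightarrow> real"
    and phi1L phi2L phi1R phi2R :: "real \<Rightarrow> complex"
    and M11 M12 M21 M22 :: complex
  assumes k0_pos: "k0 > 0"
    and w_deriv: "\<forall>x. (w has_real_derivative wd x) (at x)"
    and wd_deriv: "\<forall>x. (wd has_real_derivative wdd x) (at x)"
    and wdd_cont: "continuous_on UNIV wdd"
    and w_bot: "(w \<longlongrightarrow> k0) at_bot"
    and w_top: "(w \<longlongrightarrow> - k0) at_top"
    and U_int: "(\<lambda>x. (1 + \<bar>x\<bar>) * cmod (pot w wd k0 x)) integrable_on UNIV"
    and k_nz: "k \<noteq> 0"
    and J1L: "jost (pot w wd k0) k (\<i> * complex_of_real k) at_bot phi1L"
    and J2L: "jost (pot w wd k0) k (- \<i> * complex_of_real k) at_bot phi2L"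
    and J1R: "jost (pot w wd k0) k (\<i> * complex_of_real k) at_top phi1R"
    and J2R: "jost (pot w wd k0) k (- \<i> * complex_of_real k) at_top phi2R"
    and M1: "\<forall>x. phi1L x = M11 * phi1R x + M21 * phi2R x"
    and M2: "\<forall>x. phi2L x = M12 * phi1R x + M22 * phi2R x"
  shows "complex_of_real (k + k0) * M22 = complex_of_real (k - k0) * cnj M11
    \<and> (k \<noteq> k0 \<and> k \<noteq> - k0 \<longrightarrow>
          M11 = cnj M22 * complex_of_real ((k + k0) / (k - k0)) \<and> M12 = - cnj M21)
    \<and> (k = k0 \<longrightarrow> M22 = 0)
    \<and> (k \<noteq> k0 \<and> k \<noteq> - k0 \<and> M22 = 0 \<longrightarrow> M11 = 0)"
  \<comment> \<open>wd_deriv, wdd_cont and U_int only serve to guarantee that the Jost solutions exist;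
    here they are given.\<close>
proof -
  have minus_ik: "- \<i> * complex_of_real k = \<i> * complex_of_real (- k)"
    by simp
  obtain phi1L' phi2L' phi1R' phi2R' where
      sol1L: "schr_sol (pot w wd k0) k phi1L phi1L'" and jost1L: "jost_asymptotics at_bot k phi1L phi1L'"
    and sol2L: "schr_sol (pot w wd k0) k phi2L phi2L'" and jost2L: "jost_asymptotics at_bot (- k) phi2L phi2L'"
    and sol1R: "schr_sol (pot w wd k0) k phi1R phi1R'" and jost1R: "jost_asymptotics at_top k phi1R phi1R'"
    and sol2R: "schr_sol (pot w wd k0) k phi2R phi2R'" and jost2R: "jost_asymptotics at_top (- k) phi2R phi2R'"
    using J1L J2L J1R J2R unfolding minus_ik by (meson jost_imp_asymptotics)
  have "phi1L = (\<lambda>x. M11 * phi1R x + M21 * phi2R x)"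
    using M1 by blast
  with sol1L have "phi1L' = (\<lambda>x. M11 * phi1R' x + M21 * phi2R' x)"
    using schr_sol_deriv_unique schr_sol_lincomb[OF sol1R sol2R] by metis
  then have "cnj M11 * dual_sol w phi1R phi1R' x + cnj M21 * dual_sol w phi2R phi2R' x
      + \<i> * complex_of_real (k + k0) * M12 * phi1R x + \<i> * complex_of_real (k + k0) * M22 * phi2R x = 0" for x
    using dual_sol_left_jost[OF w_deriv[rule_format] w_bot k_nz sol1L jost1L sol2L jost2L, of x] M1 M2
    by (simp add: dual_sol_def algebra_simps)
  from dual_jost_combination_coefficients[OF w_top k_nz jost1R jost2R this]
  have "\<i> * (complex_of_real (k + k0) * (M12 + cnj M21)) = 0"
    and "\<i> * (complex_of_real (k + k0) * M22 - complex_of_real (k - k0) * cnj M11) = 0"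
    by algebra+
  then have A: "complex_of_real (k + k0) * (M12 + cnj M21) = 0"
    and B: "complex_of_real (k + k0) * M22 = complex_of_real (k - k0) * cnj M11"
    by simp_all
  from arg_cong[OF B, of cnj]
  have B': "complex_of_real (k + k0) * cnj M22 = complex_of_real (k - k0) * M11"
    by simp
  show ?thesis
  proof (intro conjI impI)
    show "complex_of_real (k + k0) * M22 = complex_of_real (k - k0) * cnj M11"
      by (rule B)
  next
    assume "k \<noteq> k0 \<and> k \<noteq> - k0"
    then have "complex_of_real (k - k0) \<noteq> 0" and "complex_of_real (k + k0) \<noteq> 0"
      by (auto simp del: of_real_add of_real_diff)
    with B' show "M11 = cnj M22 * complex_of_real ((k + k0) / (k - k0))"
      by (simp add: field_simps)
    from A \<open>complex_of_real (k + k0) \<noteq> 0\<close> show "M12 = - cnj M21"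
      by (simp add: add_eq_0_iff2 del: of_real_add)
  next
    assume "k = k0"
    with B k0_pos show "M22 = 0"
      by simp
  next
    assume "k \<noteq> k0 \<and> k \<noteq> - k0 \<and> M22 = 0"
    with B show "M11 = 0"
      by simp
  qed
qed

end
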